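(* Consider the planar system $$\frac{dC}{dt} = 1 + m_1\frac{CL}{1+L} - m_2\frac{CL}{1+m_3C} - m_4C,\qquad \frac{dL}{dt} = L - m_5 CL,$$ with positive parameters $m_1,\dots,m_5$, and its equilibrium $E_3=(1/m_5,L_3)$, where $L_3=\frac{-b+\sqrt{\Delta}}{2a}$ with $a=-\frac{m_2}{1+m_3/m_5}$, $b=m_1+m_5-m_4-\frac{m_2}{1+m_3/m_5}$, $c=m_5-m_4$, $\Delta=b^2-4ac$. A Hopf bifurcation occurs at $E_3$ when $$m_2=\frac{(m_3+m_5)^2\,(m_1m_3-m_4m_3-m_5^2)}{m_3\,(m_3m_4+m_5^2)},$$ under the conditions $$m_1>\frac{(m_3m_4+m_5^2)^2}{m_3^2(m_4-m_5)}\quad\text{and}\quad m_4>m_5.$$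
   Context: Nondimensional model of CAR-T cells $C$ and lymphoma cells $L$; $E_3$ is one of the two coexistence equilibria with $C=1/m_5$, its $L$-coordinate being a root of $aL^2+bL+c=0$. *)

theory Defs
  imports "HOL-Analysis.Analysis"
begin

definition cart_field :: "real \<Rightarrow> real \<Rightarrow> real \<Rightarrow> real \<Rightarrow> real \<Rightarrow> real \<times> real \<Rightarrow> real \<times> real" where
  "cart_field m1 m2 m3 m4 m5 x =
     (let C = fst x; L = snd x in
       (1 + m1 * C * L / (1 + L) - m2 * C * L / (1 + m3 * C) - m4 * C,
        L - m5 * C * L))"

definition L3 :: "real \<Rightarrow> real \<Rightarrow> real \<Rightarrow> real \<Rightarrow> real \<Rightarrow> real" where
  "L3 m1 m2 m3 m4 m5 =
     (let a = - m2 / (1 + m3 / m5);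
          b = m1 + m5 - m4 - m2 / (1 + m3 / m5);
          c = m5 - m4;
          \<Delta> = b\<^sup>2 - 4 * a * c
      in (- b + sqrt \<Delta>) / (2 * a))"

definition E3 :: "real \<Rightarrow> real \<Rightarrow> real \<Rightarrow> real \<Rightarrow> real \<Rightarrow> real \<times> real" where
  "E3 m1 m2 m3 m4 m5 = (1 / m5, L3 m1 m2 m3 m4 m5)"

definition tr2 :: "(real \<times> real \<Rightarrow> real \<times> real) \<Rightarrow> real" where
  "tr2 J = fst (J (1, 0)) + snd (J (0, 1))"

definition det2 :: "(real \<times> real \<Rightarrow> real \<times> real) \<Rightarrow> real" where
  "det2 J = fst (J (1, 0)) * snd (J (0, 1)) - fst (J (0, 1)) * snd (J (1, 0))"

definition eigenvalues2 :: "(real \<times> real \<Rightarrow> real \<times> real) \<Rightarrow> complex set" where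
  "eigenvalues2 J = {z. z\<^sup>2 - complex_of_real (tr2 J) * z + complex_of_real (det2 J) = 0}"

text \<open>Hopf bifurcation (standard hypotheses of the planar Hopf theorem) for the family
  F \<mu> with a branch of equilibria xe \<mu> at \<mu> = \<mu>0: on a neighbourhood of \<mu>0, xe \<mu> is an
  equilibrium at which F \<mu> is differentiable with Jacobian J \<mu>; the Jacobian at \<mu>0 has
  exactly the eigenvalues +/-i\<omega> with \<omega> > 0; and a continuation ev(\<mu>) of the eigenvalue i\<omega>
  crosses the imaginary axis with nonzero speed.\<close>
definition hopf_bifurcation_at ::
  "(real \<Rightarrow> real \<times> real \<Rightarrow> real \<times> real) \<Rightarrow> (real \<Rightarrow> real \<times> real) \<Rightarrow> real \<Rightarrow> bool" where
  "hopf_bifurcation_at F xe \<mu>0 \<longleftrightarrow>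
     (\<exists>\<delta>>0. \<exists>J. \<exists>ev::real \<Rightarrow> complex. \<exists>\<omega>>0. \<exists>d.
        (\<forall>\<mu>. \<bar>\<mu> - \<mu>0\<bar> < \<delta> \<longrightarrow>
              F \<mu> (xe \<mu>) = 0 \<and> (F \<mu> has_derivative J \<mu>) (at (xe \<mu>)) \<and>
              ev \<mu> \<in> eigenvalues2 (J \<mu>)) \<and>
        eigenvalues2 (J \<mu>0) = {\<i> * complex_of_real \<omega>, - \<i> * complex_of_real \<omega>} \<and>
        ev \<mu>0 = \<i> * complex_of_real \<omega> \<and>
        ((\<lambda>\<mu>. Re (ev \<mu>)) has_real_derivative d) (at \<mu>0) \<and> d \<noteq> 0)"

end

theory Submission
  imports Defs "HOL-Library.Quadratic_Discriminant"
begin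

(* At C = 1/m5 the equation dL/dt = 0 holds identically and dC/dt = 0 becomes the quadratic
   a L^2 + b L + c = 0 of the statement, whose root (-b + sqrt Delta)/(2a) is L3. With
   P = m3 m4 + m5^2, D = m1 m3 - m4 m3 - m5^2 and S = m3 + m5, at m2 = m2c the quadratic has the roots
   P/D and m3 (m4 - m5) / (S m5), and the hypothesis on m1 says that D > 0 and that P/D is the smaller
   one; as a < 0, this makes L3 = P/D. Using the quadratic, the trace of the Jacobian at E3 simplifies
   to m2 m3 m5 L3 / S^2 - m5, which vanishes at m2c, and the hypothesis on m1 again makes the
   determinant positive there. Implicit differentiation of the quadratic gives
   dL3/dm2 = L3 (1 + L3) / (K sqrt Delta) > 0 with K = 1 + m3/m5, so the trace, twice the real part of
   the complex pair of eigenvalues, crosses zero with positive speed. *)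

lemma isCont_eventually_greater:
  fixes f :: "'a::t2_space \<Rightarrow> 'b::linorder_topology"
  assumes "isCont f x" "c < f x"
  shows "\<forall>\<^sub>F y in nhds x. c < f y"
  using order_tendstoD(1)[OF isCont_tendsto_compose[OF assms(1) filterlim_ident] assms(2)] .

definition quadratic_root :: "real \<Rightarrow> real \<Rightarrow> real \<Rightarrow> real" where
  "quadratic_root a b c = (- b + sqrt (discrim a b c)) / (2 * a)"

lemma quadratic_root_eq_0:
  assumes "a \<noteq> 0" "discrim a b c \<ge> 0"
  shows "a * (quadratic_root a b c)\<^sup>2 + b * quadratic_root a b c + c = 0"
  using discriminant_nonneg[OF assms, of "quadratic_root a b c"] by (simp add: quadratic_root_def)

lemma quadratic_root_sqrt_discrim:
  assumes "a \<noteq> 0"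
  shows "2 * a * quadratic_root a b c + b = sqrt (discrim a b c)"
  using assms by (simp add: quadratic_root_def)

lemma quadratic_root_of_roots:
  fixes a x1 x2 :: real
  assumes "a < 0" "x1 < x2"
  shows "discrim a (- a * (x1 + x2)) (a * x1 * x2) = (a * (x2 - x1))\<^sup>2"
    and "quadratic_root a (- a * (x1 + x2)) (a * x1 * x2) = x1"
proof -
  show discr: "discrim a (- a * (x1 + x2)) (a * x1 * x2) = (a * (x2 - x1))\<^sup>2"
    by (simp add: discrim_def power2_eq_square algebra_simps)
  have "sqrt ((a * (x2 - x1))\<^sup>2) = - a * (x2 - x1)"
    using assms by (simp add: abs_mult)
  then show "quadratic_root a (- a * (x1 + x2)) (a * x1 * x2) = x1"
    using assms(1) unfolding quadratic_root_def discr by (simp add: field_simps)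
qed

lemma quadratic_root_has_real_derivative:
  fixes a b c :: "real \<Rightarrow> real"
  assumes a: "(a has_real_derivative a') (at x)" and b: "(b has_real_derivative b') (at x)"
    and c: "(c has_real_derivative c') (at x)"
    and "a x \<noteq> 0" and "discrim (a x) (b x) (c x) > 0"
  defines "r \<equiv> \<lambda>y. quadratic_root (a y) (b y) (c y)"
  shows "(r has_real_derivative
           - (a' * (r x)\<^sup>2 + b' * r x + c') / sqrt (discrim (a x) (b x) (c x))) (at x)"
proof -
  (* The closed formula shows that r is differentiable; the value of the derivative is then read
     off by differentiating a y * (r y)^2 + b y * r y + c y = 0, which holds near x. *)
  have "\<exists>r'. (r has_real_derivative r') (at x)"
    using assms(4,5) unfolding r_def quadratic_root_def discrim_def
    by (auto intro!: exI derivative_eq_intros a b c)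
  then obtain r' where r': "(r has_real_derivative r') (at x)" by blast
  have "isCont a x" "isCont b x" "isCont c x"
    using a b c by (auto intro: DERIV_isCont)
  then have "isCont (\<lambda>y. (a y)\<^sup>2) x" "isCont (\<lambda>y. discrim (a y) (b y) (c y)) x"
    unfolding discrim_def by (auto intro!: continuous_intros)
  then have "\<forall>\<^sub>F y in nhds x. (a y)\<^sup>2 > 0 \<and> discrim (a y) (b y) (c y) > 0"
    using assms(4,5) by (intro eventually_conj isCont_eventually_greater) auto
  then have "\<forall>\<^sub>F y in nhds x. a y * (r y)\<^sup>2 + b y * r y + c y = 0"
    by eventually_elim (auto simp: r_def quadratic_root_eq_0)
  moreover have "((\<lambda>y. a y * (r y)\<^sup>2 + b y * r y + c y) has_real_derivative
      a' * (r x)\<^sup>2 + a x * (2 * r x * r') + b' * r x + b x * r' + c') (at x)"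
    by (auto intro!: derivative_eq_intros a b c r' simp: power2_eq_square)
  ultimately have "((\<lambda>y. 0) has_real_derivative
      a' * (r x)\<^sup>2 + a x * (2 * r x * r') + b' * r x + b x * r' + c') (at x)"
    by (subst (asm) DERIV_cong_ev[OF refl _ refl])
  then have "(2 * a x * r x + b x) * r' = - (a' * (r x)\<^sup>2 + b' * r x + c')"
    using DERIV_const DERIV_unique by (fastforce simp: algebra_simps)
  then have "sqrt (discrim (a x) (b x) (c x)) * r' = - (a' * (r x)\<^sup>2 + b' * r x + c')"
    unfolding r_def quadratic_root_sqrt_discrim[OF assms(4)] .
  then have "r' = - (a' * (r x)\<^sup>2 + b' * r x + c') / sqrt (discrim (a x) (b x) (c x))"
    using assms(5) by (simp add: eq_divide_eq mult.commute)
  with r' show ?thesis by simp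
qed

lemma eigenvalues2_complex_root:
  assumes "(tr2 J)\<^sup>2 \<le> 4 * det2 J"
  shows "Complex (tr2 J / 2) (sqrt (det2 J - (tr2 J)\<^sup>2 / 4)) \<in> eigenvalues2 J"
proof -
  have "(sqrt (det2 J - (tr2 J)\<^sup>2 / 4))\<^sup>2 = det2 J - (tr2 J)\<^sup>2 / 4"
    using assms by simp
  then show ?thesis
    by (simp add: eigenvalues2_def complex_eq_iff power2_eq_square algebra_simps)
qed

lemma eigenvalues2_trace_zero:
  assumes "tr2 J = 0" "det2 J = \<omega>\<^sup>2"
  shows "eigenvalues2 J = {\<i> * complex_of_real \<omega>, - \<i> * complex_of_real \<omega>}"
proof -
  have "z\<^sup>2 + complex_of_real (\<omega>\<^sup>2) = (z - \<i> * complex_of_real \<omega>) * (z + \<i> * complex_of_real \<omega>)"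
    for z by (simp add: power2_eq_square algebra_simps)
  then show ?thesis
    using assms by (auto simp: eigenvalues2_def eq_neg_iff_add_eq_0)
qed

lemma hopf_bifurcation_atI:
  fixes J :: "real \<Rightarrow> real \<times> real \<Rightarrow> real \<times> real"
  assumes equilibria: "\<forall>\<^sub>F \<mu> in nhds \<mu>0. F \<mu> (xe \<mu>) = 0 \<and> (F \<mu> has_derivative J \<mu>) (at (xe \<mu>))"
    and tr: "tr2 (J \<mu>0) = 0" and det: "det2 (J \<mu>0) > 0"
    and crossing: "((\<lambda>\<mu>. tr2 (J \<mu>)) has_real_derivative d) (at \<mu>0)" "d \<noteq> 0"
    and det_cont: "isCont (\<lambda>\<mu>. det2 (J \<mu>)) \<mu>0"
  shows "hopf_bifurcation_at F xe \<mu>0"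
proof -
  (* While tr^2 < 4 det, the eigenvalues are the pair tr/2 +- i sqrt (det - tr^2/4). *)
  define ev where "ev \<mu> = Complex (tr2 (J \<mu>) / 2) (sqrt (det2 (J \<mu>) - (tr2 (J \<mu>))\<^sup>2 / 4))" for \<mu>
  define \<omega> where "\<omega> = sqrt (det2 (J \<mu>0))"
  have "isCont (\<lambda>\<mu>. 4 * det2 (J \<mu>) - (tr2 (J \<mu>))\<^sup>2) \<mu>0"
    using det_cont DERIV_isCont[OF crossing(1)] by (intro continuous_intros)
  then have "\<forall>\<^sub>F \<mu> in nhds \<mu>0. 4 * det2 (J \<mu>) - (tr2 (J \<mu>))\<^sup>2 > 0"
    using tr det by (intro isCont_eventually_greater) auto
  with equilibria have "\<forall>\<^sub>F \<mu> in nhds \<mu>0. F \<mu> (xe \<mu>) = 0 \<and>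
      (F \<mu> has_derivative J \<mu>) (at (xe \<mu>)) \<and> ev \<mu> \<in> eigenvalues2 (J \<mu>)"
    unfolding ev_def by eventually_elim (simp add: eigenvalues2_complex_root)
  then obtain \<delta> where "\<delta> > 0" and branch: "\<forall>\<mu>. \<bar>\<mu> - \<mu>0\<bar> < \<delta> \<longrightarrow> F \<mu> (xe \<mu>) = 0 \<and>
      (F \<mu> has_derivative J \<mu>) (at (xe \<mu>)) \<and> ev \<mu> \<in> eigenvalues2 (J \<mu>)"
    unfolding eventually_nhds_metric dist_real_def by blast
  have "eigenvalues2 (J \<mu>0) = {\<i> * complex_of_real \<omega>, - \<i> * complex_of_real \<omega>}"
    using tr det by (intro eigenvalues2_trace_zero) (auto simp: \<omega>_def)
  moreover have "ev \<mu>0 = \<i> * complex_of_real \<omega>"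
    using tr by (simp add: ev_def \<omega>_def complex_eq_iff)
  moreover have "((\<lambda>\<mu>. Re (ev \<mu>)) has_real_derivative d / 2) (at \<mu>0)"
    unfolding ev_def using crossing(1) by (auto intro!: derivative_eq_intros)
  moreover have "\<omega> > 0" "d / 2 \<noteq> 0"
    using det crossing(2) by (auto simp: \<omega>_def)
  ultimately show ?thesis
    unfolding hopf_bifurcation_at_def using \<open>\<delta> > 0\<close> branch by blast
qed

definition cart_jacobian ::
  "real \<Rightarrow> real \<Rightarrow> real \<Rightarrow> real \<Rightarrow> real \<Rightarrow> real \<times> real \<Rightarrow> real \<times> real \<Rightarrow> real \<times> real" where
  "cart_jacobian m1 m2 m3 m4 m5 x h =
     (let C = fst x; L = snd x in
       ((m1 * L / (1 + L) - m2 * L / (1 + m3 * C)\<^sup>2 - m4) * fst h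
          + (m1 * C / (1 + L)\<^sup>2 - m2 * C / (1 + m3 * C)) * snd h,
        - m5 * L * fst h + (1 - m5 * C) * snd h))"

lemma cart_field_has_derivative:
  assumes "1 + L \<noteq> 0" "1 + m3 * C \<noteq> 0"
  shows "(cart_field m1 m2 m3 m4 m5 has_derivative cart_jacobian m1 m2 m3 m4 m5 (C, L)) (at (C, L))"
proof -
  define g where "g L = L / (1 + L)" for L :: real
  define h where "h C = C / (1 + m3 * C)" for C :: real
  have g': "(g has_real_derivative 1 / (1 + L)\<^sup>2) (at (snd (C, L)))"
    using assms(1) unfolding g_def
    by (auto intro!: derivative_eq_intros simp: field_simps power2_eq_square)
  have h': "(h has_real_derivative 1 / (1 + m3 * C)\<^sup>2) (at (fst (C, L)))"
    using assms(2) unfolding h_def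
    by (auto intro!: derivative_eq_intros simp: field_simps power2_eq_square)
  have field: "cart_field m1 m2 m3 m4 m5 = (\<lambda>x. (1 + m1 * fst x * g (snd x) - m2 * snd x * h (fst x)
      - m4 * fst x, snd x - m5 * fst x * snd x))"
    by (simp add: cart_field_def g_def h_def fun_eq_iff)
  show ?thesis
    unfolding field
    by (rule has_derivative_eq_rhs, (rule derivative_eq_intros refl
          DERIV_compose_FDERIV[where g=snd, OF g'] DERIV_compose_FDERIV[where g=fst, OF h'])+)
      (simp add: cart_jacobian_def g_def h_def fun_eq_iff algebra_simps)
qed

lemma E3_quadratic_eq:
  fixes K L :: real
  assumes "1 + L \<noteq> 0" "K \<noteq> 0"
  shows "- m2 / K * L\<^sup>2 + (m1 + m5 - m4 - m2 / K) * L + (m5 - m4)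
           = (1 + L) * (m1 * L / (1 + L) - m2 * L / K + m5 - m4)"
proof -
  have "(1 + L) * (m1 * L / (1 + L)) = m1 * L"
    using assms(1) by simp
  then show ?thesis
    by (simp add: algebra_simps power2_eq_square add_divide_distrib)
qed

lemma cart_field_E3_eq_0_iff:
  assumes "m3 > 0" "m5 > 0" "1 + L \<noteq> 0"
  defines "K \<equiv> 1 + m3 / m5"
  shows "cart_field m1 m2 m3 m4 m5 (1 / m5, L) = 0 \<longleftrightarrow>
         - m2 / K * L\<^sup>2 + (m1 + m5 - m4 - m2 / K) * L + (m5 - m4) = 0"
proof -
  have "K > 0"
    using assms(1,2) by (simp add: K_def add_pos_pos)
  have "1 + m3 * (1 / m5) = K"
    by (simp add: K_def)
  then have "fst (cart_field m1 m2 m3 m4 m5 (1 / m5, L)) = (m1 * L / (1 + L) - m2 * L / K + m5 - m4) / m5"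
    using assms(2)
    by (simp add: cart_field_def diff_divide_distrib add_divide_distrib mult.commute)
  moreover have "snd (cart_field m1 m2 m3 m4 m5 (1 / m5, L)) = 0"
    using assms(2) by (simp add: cart_field_def)
  ultimately show ?thesis
    using assms(2,3) E3_quadratic_eq[OF assms(3), of K] \<open>K > 0\<close> by (simp add: prod_eq_iff)
qed

lemma tr2_cart_jacobian_E3:
  assumes "m3 > 0" "m5 > 0" "1 + L \<noteq> 0"
  defines "K \<equiv> 1 + m3 / m5"
  assumes "- m2 / K * L\<^sup>2 + (m1 + m5 - m4 - m2 / K) * L + (m5 - m4) = 0"
  shows "tr2 (cart_jacobian m1 m2 m3 m4 m5 (1 / m5, L)) = m2 * m3 * m5 * L / (m3 + m5)\<^sup>2 - m5"
proof -
  have K: "K = (m3 + m5) / m5"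
    using assms(2) by (simp add: K_def field_simps)
  then have "K \<noteq> 0"
    using assms(1,2) by simp
  then have "m1 * L / (1 + L) = m2 * L / K - m5 + m4"
    using assms(3,5) E3_quadratic_eq[OF assms(3)] by simp
  then have "tr2 (cart_jacobian m1 m2 m3 m4 m5 (1 / m5, L)) = m2 * L / K - m2 * L / K\<^sup>2 - m5"
    using assms(2) by (simp add: tr2_def cart_jacobian_def K_def)
  also have "\<dots> = m2 * m3 * m5 * L / (m3 + m5)\<^sup>2 - m5"
    using assms(1,2) unfolding K
    by (simp add: power_divide divide_simps) (simp add: power2_eq_square algebra_simps)
  finally show ?thesis .
qed

lemma det2_cart_jacobian_E3:
  assumes "m5 \<noteq> 0"
  shows "det2 (cart_jacobian m1 m2 m3 m4 m5 (1 / m5, L)) = L * (m1 / (1 + L)\<^sup>2 - m2 / (1 + m3 / m5))"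
  using assms by (simp add: det2_def cart_jacobian_def field_simps)

lemma L3_eq_quadratic_root:
  "L3 m1 m2 m3 m4 m5 =
     quadratic_root (- m2 / (1 + m3 / m5)) (m1 + m5 - m4 - m2 / (1 + m3 / m5)) (m5 - m4)"
  by (simp add: L3_def quadratic_root_def discrim_def Let_def)

lemma L3_has_real_derivative:
  assumes "m3 > 0" "m5 > 0" "m2 \<noteq> 0"
  defines "K \<equiv> 1 + m3 / m5"
  assumes "discrim (- m2 / K) (m1 + m5 - m4 - m2 / K) (m5 - m4) > 0"
  defines "L \<equiv> L3 m1 m2 m3 m4 m5"
  shows "((\<lambda>\<mu>. L3 m1 \<mu> m3 m4 m5) has_real_derivative
           L * (1 + L) / (K * sqrt (discrim (- m2 / K) (m1 + m5 - m4 - m2 / K) (m5 - m4)))) (at m2)"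
proof -
  define a where "a \<mu> = - \<mu> / K" for \<mu>
  define b where "b \<mu> = m1 + m5 - m4 - \<mu> / K" for \<mu>
  have "K > 0"
    using assms(1,2) by (simp add: K_def add_pos_pos)
  then have "(a has_real_derivative - 1 / K) (at m2)" "(b has_real_derivative - 1 / K) (at m2)"
    unfolding a_def b_def by (auto intro!: derivative_eq_intros)
  from quadratic_root_has_real_derivative[OF this DERIV_const, of "m5 - m4"]
  have "((\<lambda>\<mu>. quadratic_root (a \<mu>) (b \<mu>) (m5 - m4)) has_real_derivative
      - (- 1 / K * L\<^sup>2 + - 1 / K * L + 0) / sqrt (discrim (a m2) (b m2) (m5 - m4))) (at m2)"
    using assms(3,5) \<open>K > 0\<close>
    by (simp add: a_def b_def L_def L3_eq_quadratic_root K_def)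
  moreover have "(\<lambda>\<mu>. quadratic_root (a \<mu>) (b \<mu>) (m5 - m4)) = (\<lambda>\<mu>. L3 m1 \<mu> m3 m4 m5)"
    by (simp add: a_def b_def L3_eq_quadratic_root K_def)
  moreover have "- (- 1 / K * L\<^sup>2 + - 1 / K * L + 0) = L * (1 + L) / K"
    using \<open>K > 0\<close> by (simp add: field_simps power2_eq_square)
  ultimately show ?thesis
    by (simp add: a_def b_def)
qed

lemma isCont_L3:
  assumes "m3 > 0" "m5 > 0" "m2 \<noteq> 0"
    and "discrim (- m2 / (1 + m3 / m5)) (m1 + m5 - m4 - m2 / (1 + m3 / m5)) (m5 - m4) > 0"
  shows "isCont (\<lambda>\<mu>. L3 m1 \<mu> m3 m4 m5) m2"
  using L3_has_real_derivative[OF assms(1-3)] assms(4) by (auto intro: DERIV_isCont)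

lemma E3_equilibrium:
  assumes "m3 > 0" "m5 > 0" "m2 \<noteq> 0"
  defines "K \<equiv> 1 + m3 / m5"
  assumes "discrim (- m2 / K) (m1 + m5 - m4 - m2 / K) (m5 - m4) \<ge> 0"
    and "L3 m1 m2 m3 m4 m5 > 0"
  defines "x \<equiv> E3 m1 m2 m3 m4 m5"
  shows "cart_field m1 m2 m3 m4 m5 x = 0"
    and "(cart_field m1 m2 m3 m4 m5 has_derivative cart_jacobian m1 m2 m3 m4 m5 x) (at x)"
    and "tr2 (cart_jacobian m1 m2 m3 m4 m5 x) = m2 * m3 * m5 * L3 m1 m2 m3 m4 m5 / (m3 + m5)\<^sup>2 - m5"
proof -
  define L where "L = L3 m1 m2 m3 m4 m5"
  have "K > 0"
    using assms(1,2) by (simp add: K_def add_pos_pos)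
  then have "- m2 / K * L\<^sup>2 + (m1 + m5 - m4 - m2 / K) * L + (m5 - m4) = 0"
    using quadratic_root_eq_0[OF _ assms(5)] assms(3)
    by (simp add: L_def L3_eq_quadratic_root K_def)
  moreover have "x = (1 / m5, L)" "1 + L \<noteq> 0" "1 + m3 * (1 / m5) \<noteq> 0"
    using assms(6) \<open>K > 0\<close> by (simp_all add: x_def E3_def L_def K_def)
  ultimately show "cart_field m1 m2 m3 m4 m5 x = 0"
    and "(cart_field m1 m2 m3 m4 m5 has_derivative cart_jacobian m1 m2 m3 m4 m5 x) (at x)"
    and "tr2 (cart_jacobian m1 m2 m3 m4 m5 x) = m2 * m3 * m5 * L3 m1 m2 m3 m4 m5 / (m3 + m5)\<^sup>2 - m5"
    using cart_field_E3_eq_0_iff cart_field_has_derivative tr2_cart_jacobian_E3 assms(1,2)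
    by (simp_all add: K_def L_def)
qed

lemma E3_branch:
  assumes "m3 > 0" "m5 > 0" "m2 > 0"
  defines "K \<equiv> 1 + m3 / m5"
  assumes "discrim (- m2 / K) (m1 + m5 - m4 - m2 / K) (m5 - m4) > 0"
    and "L3 m1 m2 m3 m4 m5 > 0"
  shows "\<forall>\<^sub>F \<mu> in nhds m2. cart_field m1 \<mu> m3 m4 m5 (E3 m1 \<mu> m3 m4 m5) = 0 \<and>
           (cart_field m1 \<mu> m3 m4 m5 has_derivative cart_jacobian m1 \<mu> m3 m4 m5 (E3 m1 \<mu> m3 m4 m5))
             (at (E3 m1 \<mu> m3 m4 m5)) \<and>
           tr2 (cart_jacobian m1 \<mu> m3 m4 m5 (E3 m1 \<mu> m3 m4 m5))
             = \<mu> * m3 * m5 * L3 m1 \<mu> m3 m4 m5 / (m3 + m5)\<^sup>2 - m5"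
proof -
  have "K > 0"
    using assms(1,2) by (simp add: K_def add_pos_pos)
  have "isCont (\<lambda>\<mu>. L3 m1 \<mu> m3 m4 m5) m2"
    using isCont_L3[OF assms(1,2)] assms(3,5) by (simp add: K_def)
  moreover have "isCont (\<lambda>\<mu>. discrim (- \<mu> / K) (m1 + m5 - m4 - \<mu> / K) (m5 - m4)) m2"
    unfolding discrim_def using \<open>K > 0\<close> by (intro continuous_intros) auto
  ultimately have "\<forall>\<^sub>F \<mu> in nhds m2. \<mu> > 0 \<and> L3 m1 \<mu> m3 m4 m5 > 0 \<and>
      discrim (- \<mu> / K) (m1 + m5 - m4 - \<mu> / K) (m5 - m4) > 0"
    using assms(3,5,6) by (intro eventually_conj isCont_eventually_greater) auto
  then show ?thesis
    by eventually_elim (use E3_equilibrium[OF assms(1,2)] in \<open>auto simp: K_def\<close>)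
qed

lemma tr2_E3_has_pos_derivative:
  assumes "m3 > 0" "m5 > 0" "m2 > 0"
  defines "K \<equiv> 1 + m3 / m5"
  assumes "discrim (- m2 / K) (m1 + m5 - m4 - m2 / K) (m5 - m4) > 0"
    and "L3 m1 m2 m3 m4 m5 > 0"
  shows "\<exists>d > 0. ((\<lambda>\<mu>. tr2 (cart_jacobian m1 \<mu> m3 m4 m5 (E3 m1 \<mu> m3 m4 m5)))
           has_real_derivative d) (at m2)"
proof -
  define L where "L \<mu> = L3 m1 \<mu> m3 m4 m5" for \<mu>
  define L' where "L' = L m2 * (1 + L m2)
      / (K * sqrt (discrim (- m2 / K) (m1 + m5 - m4 - m2 / K) (m5 - m4)))"
  have "K > 0"
    using assms(1,2) by (simp add: K_def add_pos_pos)
  then have L': "(L has_real_derivative L') (at m2)" "L' > 0"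
    using L3_has_real_derivative[OF assms(1,2), of m2 m1 m4] assms(3,5,6)
    by (auto simp: L'_def L_def[abs_def] K_def)
  have "((\<lambda>\<mu>. \<mu> * m3 * m5 * L \<mu>) has_real_derivative m3 * m5 * (L m2 + m2 * L')) (at m2)"
    by (auto intro!: derivative_eq_intros L'(1) simp: algebra_simps)
  from DERIV_diff[OF DERIV_cdivide[OF this] DERIV_const]
  have "((\<lambda>\<mu>. \<mu> * m3 * m5 * L \<mu> / (m3 + m5)\<^sup>2 - m5) has_real_derivative
      m3 * m5 * (L m2 + m2 * L') / (m3 + m5)\<^sup>2) (at m2)"
    by simp
  then have "((\<lambda>\<mu>. tr2 (cart_jacobian m1 \<mu> m3 m4 m5 (E3 m1 \<mu> m3 m4 m5))) has_real_derivative
      m3 * m5 * (L m2 + m2 * L') / (m3 + m5)\<^sup>2) (at m2)"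
    using E3_branch[OF assms(1-3) assms(5,6)[unfolded K_def]]
    by (subst DERIV_cong_ev[OF refl _ refl]) (auto simp: L_def elim: eventually_mono)
  moreover have "m3 * m5 * (L m2 + m2 * L') / (m3 + m5)\<^sup>2 > 0"
    using assms(1-3,6) \<open>L' > 0\<close> by (simp add: L_def add_pos_pos)
  ultimately show ?thesis
    by blast
qed

lemma isCont_det2_E3:
  assumes "m3 > 0" "m5 > 0" "m2 \<noteq> 0"
  defines "K \<equiv> 1 + m3 / m5"
  assumes "discrim (- m2 / K) (m1 + m5 - m4 - m2 / K) (m5 - m4) > 0"
    and "L3 m1 m2 m3 m4 m5 > 0"
  shows "isCont (\<lambda>\<mu>. det2 (cart_jacobian m1 \<mu> m3 m4 m5 (E3 m1 \<mu> m3 m4 m5))) m2"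
proof -
  have "K > 0"
    using assms(1,2) by (simp add: K_def add_pos_pos)
  have "isCont (\<lambda>\<mu>. L3 m1 \<mu> m3 m4 m5) m2"
    using isCont_L3[OF assms(1-3)] assms(5) by (simp add: K_def)
  then have "isCont (\<lambda>\<mu>. L3 m1 \<mu> m3 m4 m5 * (m1 / (1 + L3 m1 \<mu> m3 m4 m5)\<^sup>2 - \<mu> / K)) m2"
    using assms(6) \<open>K > 0\<close> by (intro continuous_intros) auto
  then show ?thesis
    using assms(2) by (simp add: E3_def det2_cart_jacobian_E3 K_def)
qed

lemma critical_numerator_pos:
  fixes m1 m3 m4 m5 :: real
  assumes "m3 > 0" "m5 > 0" "m4 > m5"
    and "m1 * (m3\<^sup>2 * (m4 - m5)) > (m3 * m4 + m5\<^sup>2)\<^sup>2"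
  shows "m1 * m3 - m4 * m3 - m5\<^sup>2 > 0"
proof -
  define P where "P = m3 * m4 + m5\<^sup>2"
  have "m3 * (m4 - m5) > 0" "m3 * (m4 - m5) \<le> P"
    using assms(1-3) by (auto simp: P_def algebra_simps)
  then have "m3 * (m4 - m5) * P \<le> P * P"
    by (intro mult_right_mono) auto
  then have "m3 * (m4 - m5) * (m1 * m3 - P) > 0"
    using assms(4) by (simp add: P_def power2_eq_square algebra_simps)
  with \<open>m3 * (m4 - m5) > 0\<close> have "m1 * m3 - P > 0"
    using zero_less_mult_pos by blast
  then show ?thesis
    by (simp add: P_def algebra_simps)
qed

lemma L3_critical:
  fixes m1 m3 m4 m5 :: real
  assumes "m3 > 0" "m5 > 0" "m4 > m5"
    and "m1 * (m3\<^sup>2 * (m4 - m5)) > (m3 * m4 + m5\<^sup>2)\<^sup>2"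
  defines "m2c \<equiv> (m3 + m5)\<^sup>2 * (m1 * m3 - m4 * m3 - m5\<^sup>2) / (m3 * (m3 * m4 + m5\<^sup>2))"
    and "K \<equiv> 1 + m3 / m5"
  shows "L3 m1 m2c m3 m4 m5 = (m3 * m4 + m5\<^sup>2) / (m1 * m3 - m4 * m3 - m5\<^sup>2)"
    and "discrim (- m2c / K) (m1 + m5 - m4 - m2c / K) (m5 - m4) > 0"
proof -
  define P where "P = m3 * m4 + m5\<^sup>2"
  define D where "D = m1 * m3 - m4 * m3 - m5\<^sup>2"
  define S where "S = m3 + m5"
  have "P > 0" "D > 0" "S > 0"
    using critical_numerator_pos[OF assms(1-4)] assms(1-3)
    by (auto simp: P_def D_def S_def intro!: add_pos_nonneg)
  define k where "k = S * m5 * D / (m3 * P)"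
  define L1 where "L1 = P / D"
  define L2 where "L2 = (m4 - m5) * m3 / (S * m5)"
  have m2c: "m2c = S\<^sup>2 * D / (m3 * P)"
    by (simp add: m2c_def S_def D_def P_def)
  have K: "K = S / m5"
    using assms(2) by (simp add: K_def S_def field_simps)
  have k: "m2c / K = k"
    unfolding m2c K k_def using assms(1,2) \<open>S > 0\<close> \<open>P > 0\<close>
    by (simp add: field_simps power2_eq_square)
  have "k > 0"
    using assms(1,2) \<open>S > 0\<close> \<open>D > 0\<close> \<open>P > 0\<close> by (simp add: k_def)
  have "m3 * (m4 - m5) * D - P * (m5 * S) = m1 * (m3\<^sup>2 * (m4 - m5)) - P\<^sup>2"
    by (simp add: S_def D_def P_def power2_eq_square algebra_simps)
  then have "L1 < L2"
    using assms(1-4) \<open>S > 0\<close> \<open>D > 0\<close> \<open>P > 0\<close>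
    by (simp add: L1_def L2_def P_def field_simps)
  have b: "m1 + m5 - m4 - k = - (- k) * (L1 + L2)"
    using assms(1-3) \<open>S > 0\<close> \<open>D > 0\<close> \<open>P > 0\<close>
    by (simp add: k_def L1_def L2_def field_simps)
      (simp add: S_def D_def P_def power2_eq_square algebra_simps)
  have c: "m5 - m4 = - k * L1 * L2"
    using assms(1-3) \<open>S > 0\<close> \<open>D > 0\<close> \<open>P > 0\<close>
    by (simp add: k_def L1_def L2_def field_simps)
  have "- k < 0"
    using \<open>k > 0\<close> by simp
  note roots = quadratic_root_of_roots[OF this \<open>L1 < L2\<close>, folded b c]
  show "L3 m1 m2c m3 m4 m5 = P / D"
    using roots(2) by (simp add: L3_eq_quadratic_root K_def[symmetric] k L1_def)
  show "discrim (- m2c / K) (m1 + m5 - m4 - m2c / K) (m5 - m4) > 0"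
    using roots(1) \<open>k > 0\<close> \<open>L1 < L2\<close> by (simp add: k)
qed

lemma critical_trace_zero:
  fixes m1 m3 m4 m5 :: real
  assumes "m3 > 0" "m5 > 0" "m4 > m5"
    and "m1 * (m3\<^sup>2 * (m4 - m5)) > (m3 * m4 + m5\<^sup>2)\<^sup>2"
  defines "m2c \<equiv> (m3 + m5)\<^sup>2 * (m1 * m3 - m4 * m3 - m5\<^sup>2) / (m3 * (m3 * m4 + m5\<^sup>2))"
  shows "m2c * m3 * m5 * L3 m1 m2c m3 m4 m5 / (m3 + m5)\<^sup>2 - m5 = 0"
proof -
  define P where "P = m3 * m4 + m5\<^sup>2"
  define D where "D = m1 * m3 - m4 * m3 - m5\<^sup>2"
  have "P > 0" "D > 0"
    using critical_numerator_pos[OF assms(1-4)] assms(1-3)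
    by (auto simp: P_def D_def intro!: add_pos_nonneg)
  have L: "L3 m1 m2c m3 m4 m5 = P / D"
    using L3_critical(1)[OF assms(1-4)] by (simp add: m2c_def P_def D_def)
  have m2c: "m2c = (m3 + m5)\<^sup>2 * D / (m3 * P)"
    by (simp add: m2c_def P_def D_def)
  show ?thesis
    unfolding L unfolding m2c using assms(1,2) \<open>P > 0\<close> \<open>D > 0\<close> by (simp add: field_simps)
qed

lemma critical_det_pos:
  fixes m1 m3 m4 m5 :: real
  assumes "m3 > 0" "m5 > 0" "m4 > m5"
    and "m1 * (m3\<^sup>2 * (m4 - m5)) > (m3 * m4 + m5\<^sup>2)\<^sup>2"
  defines "m2c \<equiv> (m3 + m5)\<^sup>2 * (m1 * m3 - m4 * m3 - m5\<^sup>2) / (m3 * (m3 * m4 + m5\<^sup>2))"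
  shows "L3 m1 m2c m3 m4 m5 * (m1 / (1 + L3 m1 m2c m3 m4 m5)\<^sup>2 - m2c / (1 + m3 / m5)) > 0"
proof -
  define P where "P = m3 * m4 + m5\<^sup>2"
  define D where "D = m1 * m3 - m4 * m3 - m5\<^sup>2"
  define S where "S = m3 + m5"
  have "P > 0" "D > 0" "S > 0"
    using critical_numerator_pos[OF assms(1-4)] assms(1-3)
    by (auto simp: P_def D_def S_def intro!: add_pos_nonneg)
  then have "m1 * m3 > 0"
    by (simp add: D_def P_def algebra_simps)
  with assms(1) have "m1 > 0"
    by (simp add: zero_less_mult_iff)
  have L: "L3 m1 m2c m3 m4 m5 = P / D"
    using L3_critical(1)[OF assms(1-4)] by (simp add: m2c_def P_def D_def)
  have one_plus_L: "1 + P / D = m1 * m3 / D"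
    using \<open>D > 0\<close> by (simp add: P_def D_def field_simps)
  have m2c_K: "m2c / (1 + m3 / m5) = S * m5 * D / (m3 * P)"
  proof -
    have "m2c = S\<^sup>2 * D / (m3 * P)" "1 + m3 / m5 = S / m5"
      using assms(2) by (simp_all add: m2c_def S_def D_def P_def field_simps)
    then show ?thesis
      using assms(1,2) \<open>S > 0\<close> \<open>P > 0\<close> by (simp add: field_simps power2_eq_square)
  qed
  have "m1 / (1 + P / D)\<^sup>2 - m2c / (1 + m3 / m5)
      = (D * P - m1 * m3 * m5 * S) * D / (m1 * m3\<^sup>2 * P)"
    unfolding one_plus_L m2c_K using \<open>D > 0\<close> \<open>P > 0\<close> \<open>m1 > 0\<close> assms(1)
    by (simp add: field_simps power2_eq_square)
  moreover have "D * P - m1 * m3 * m5 * S = m1 * (m3\<^sup>2 * (m4 - m5)) - P\<^sup>2"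
    by (simp add: D_def S_def P_def power2_eq_square algebra_simps)
  ultimately show ?thesis
    using assms(1,4) \<open>D > 0\<close> \<open>P > 0\<close> \<open>m1 > 0\<close> by (simp add: L P_def)
qed

theorem theorem8:
  fixes m1 m3 m4 m5 :: real
  assumes "m1 > 0" "m3 > 0" "m4 > 0" "m5 > 0"
    and "m4 > m5"
    and "m1 > (m3 * m4 + m5\<^sup>2)\<^sup>2 / (m3\<^sup>2 * (m4 - m5))"
  defines "m2c \<equiv> (m3 + m5)\<^sup>2 * (m1 * m3 - m4 * m3 - m5\<^sup>2) / (m3 * (m3 * m4 + m5\<^sup>2))"
  shows "m2c > 0 \<and>
    hopf_bifurcation_at (\<lambda>m2. cart_field m1 m2 m3 m4 m5) (\<lambda>m2. E3 m1 m2 m3 m4 m5) m2c"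
proof -
  have "m1 * (m3\<^sup>2 * (m4 - m5)) > (m3 * m4 + m5\<^sup>2)\<^sup>2"
    using assms(2,5,6) by (simp add: pos_divide_less_eq)
  note critical = assms(2,4,5) this
  note L3_crit = L3_critical[OF critical, folded m2c_def]
  have "m2c > 0"
    using critical_numerator_pos[OF critical] assms(2-4)
    by (auto simp: m2c_def intro!: divide_pos_pos mult_pos_pos add_pos_pos)
  moreover have "L3 m1 m2c m3 m4 m5 > 0"
    using critical_numerator_pos[OF critical] assms(2-4)
    by (auto simp: L3_crit(1) intro!: divide_pos_pos add_pos_pos)
  note E3_hyps = assms(2,4) \<open>m2c > 0\<close> L3_crit(2) this
  obtain d where "d > 0" and crossing: "((\<lambda>\<mu>. tr2 (cart_jacobian m1 \<mu> m3 m4 m5 (E3 m1 \<mu> m3 m4 m5)))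
      has_real_derivative d) (at m2c)"
    using tr2_E3_has_pos_derivative[OF E3_hyps] by blast
  have "hopf_bifurcation_at (\<lambda>m2. cart_field m1 m2 m3 m4 m5) (\<lambda>m2. E3 m1 m2 m3 m4 m5) m2c"
  proof (rule hopf_bifurcation_atI[OF eventually_mono[OF E3_branch[OF E3_hyps]] _ _ crossing])
    show "tr2 (cart_jacobian m1 m2c m3 m4 m5 (E3 m1 m2c m3 m4 m5)) = 0"
      using E3_equilibrium(3)[OF assms(2,4) _ less_imp_le[OF L3_crit(2)]] \<open>m2c > 0\<close>
        \<open>L3 m1 m2c m3 m4 m5 > 0\<close> critical_trace_zero[OF critical, folded m2c_def] by simp
    show "det2 (cart_jacobian m1 m2c m3 m4 m5 (E3 m1 m2c m3 m4 m5)) > 0"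
      using critical_det_pos[OF critical, folded m2c_def] assms(4)
      by (simp add: E3_def det2_cart_jacobian_E3)
    show "isCont (\<lambda>\<mu>. det2 (cart_jacobian m1 \<mu> m3 m4 m5 (E3 m1 \<mu> m3 m4 m5))) m2c"
      using isCont_det2_E3 E3_hyps by simp
  qed (use \<open>d > 0\<close> in auto)
  ultimately show ?thesis
    by blast
qed

end
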